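(* Let $k\geq 0$ be fixed and consider the one-parameter family of maps $f(x,r)=x^2\exp(r-x)+k$ with bifurcation parameter $r\in\mathbb{R}$. Let \[ x_0=\frac{k+3+\sqrt{k^2-2k+9}}{2},\qquad r_0=x_0-\ln\big(x_0(x_0-2)\big)\quad\Big(\text{equivalently } r_0=x_0+\ln\big((x_0-k)/x_0^2\big)\Big). \] Then $x_0$ is a fixed point of $f(\cdot,r_0)$ and the family undergoes a supercritical flip bifurcation at the fixed point $x_0$ for the bifurcation value $r=r_0$.
   Context: For a smooth one-parameter family $x\mapsto f(x,a)$ of maps of $\mathbb{R}$ with a fixed point $x_0$ at $a=a_0$, one says that a flip (period-doubling) bifurcation occurs at $x_0$ for $a=a_0$ if $\frac{\partial f}{\partial x}(x_0,a_0)=-1$ and the nondegeneracy conditions (B.1) $\mathcal{Q}f(x_0,a_0):=\frac12\big(\frac{\partial^2 f}{\partial x^2}(x_0,a_0)\big)^2+\frac13\frac{\partial^3 f}{\partial x^3}(x_0,a_0)\neq 0$ and (B.2) $\frac{\partial^2 f}{\partial x\partial a}(x_0,a_0)\neq0$ hold; then smooth invertible changes of coordinates and parameter transform the system into $\eta\mapsto-(1+\beta)\eta\pm\eta^3+O(\eta^4)$. The flip bifurcation is called supercritical if $\mathcal{Q}f(x_0,a_0)>0$ (the fixed point loses stability and a stable period-2 orbit emerges). *)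

theory Defs
  imports "HOL-Analysis.Analysis"
begin

definition px :: "(real \<Rightarrow> real \<Rightarrow> real) \<Rightarrow> real \<Rightarrow> real \<Rightarrow> real" where
  "px f x a = deriv (\<lambda>y. f y a) x"

definition pxx :: "(real \<Rightarrow> real \<Rightarrow> real) \<Rightarrow> real \<Rightarrow> real \<Rightarrow> real" where
  "pxx f x a = deriv (\<lambda>y. px f y a) x"

definition pxxx :: "(real \<Rightarrow> real \<Rightarrow> real) \<Rightarrow> real \<Rightarrow> real \<Rightarrow> real" where
  "pxxx f x a = deriv (\<lambda>y. pxx f y a) x"

definition pxa :: "(real \<Rightarrow> real \<Rightarrow> real) \<Rightarrow> real \<Rightarrow> real \<Rightarrow> real" where
  "pxa f x a = deriv (\<lambda>b. px f x b) a"

definition Qf :: "(real \<Rightarrow> real \<Rightarrow> real) \<Rightarrow> real \<Rightarrow> real \<Rightarrow> real" where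
  "Qf f x a = (pxx f x a)\<^sup>2 / 2 + pxxx f x a / 3"

definition regular_family :: "(real \<Rightarrow> real \<Rightarrow> real) \<Rightarrow> bool" where
  "regular_family f \<longleftrightarrow>
     continuous_on UNIV (\<lambda>(x, a). f x a) \<and>
     (\<forall>x a. (\<lambda>y. f y a) differentiable at x \<and>
            (\<lambda>y. px f y a) differentiable at x \<and>
            (\<lambda>y. pxx f y a) differentiable at x \<and>
            (\<lambda>b. px f x b) differentiable at a)"

definition flip_bifurcation :: "(real \<Rightarrow> real \<Rightarrow> real) \<Rightarrow> real \<Rightarrow> real \<Rightarrow> bool" where
  "flip_bifurcation f x0 a0 \<longleftrightarrow>
     regular_family f \<and> f x0 a0 = x0 \<and>
     px f x0 a0 = -1 \<and> Qf f x0 a0 \<noteq> 0 \<and> pxa f x0 a0 \<noteq> 0"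

definition supercritical_flip_bifurcation :: "(real \<Rightarrow> real \<Rightarrow> real) \<Rightarrow> real \<Rightarrow> real \<Rightarrow> bool" where
  "supercritical_flip_bifurcation f x0 a0 \<longleftrightarrow>
     flip_bifurcation f x0 a0 \<and> Qf f x0 a0 > 0"

end

theory Submission
  imports Defs
begin

text \<open>Every \<open>x\<close>-derivative of \<open>f x r = x\<^sup>2 exp (r - x) + k\<close> is a quadratic polynomial in \<open>x\<close>
  times \<open>exp (r - x)\<close>; in particular \<open>f\<^sub>x = -x(x - 2) exp (r - x)\<close>. The parameter
  \<open>r = x - ln (x(x - 2))\<close> is exactly the one making \<open>f\<^sub>x = -1\<close> at a point \<open>x > 2\<close>; there also
  \<open>f\<^sub>x\<^sub>r = f\<^sub>x = -1\<close> and, with \<open>t = x - 2\<close>, \<open>6 (x(x - 2))\<^sup>2 Q = t\<^sup>4 + 8t + 12 > 0\<close>. So every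
  \<open>x > 2\<close> is a supercritical flip point for its own parameter value, and the fixed point
  equation \<open>x\<^sup>2 / (x(x - 2)) + k = x\<close> reduces to \<open>x\<^sup>2 - (k + 3)x + 2k = 0\<close>, whose larger root
  is \<open>x\<^sub>0\<close>.\<close>

lemma family_has_derivative_x:
  "((\<lambda>y. y\<^sup>2 * exp (a - y) + (k::real)) has_real_derivative (2*x - x\<^sup>2) * exp (a - x)) (at x)"
  by (auto intro!: derivative_eq_intros simp: algebra_simps power2_eq_square)

lemma family_px_has_derivative_x:
  "((\<lambda>y. (2*y - y\<^sup>2) * exp (a - y)) has_real_derivative (2 - 4*x + x\<^sup>2) * exp (a - x)) (at x)"
  by (auto intro!: derivative_eq_intros simp: algebra_simps power2_eq_square)

lemma family_pxx_has_derivative_x: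
  "((\<lambda>y. (2 - 4*y + y\<^sup>2) * exp (a - y)) has_real_derivative (-6 + 6*x - x\<^sup>2) * exp (a - x)) (at x)"
  by (auto intro!: derivative_eq_intros simp: algebra_simps power2_eq_square)

lemma family_px_has_derivative_param:
  "((\<lambda>b. (2*x - x\<^sup>2) * exp (b - x)) has_real_derivative (2*x - x\<^sup>2) * exp (a - x)) (at a)"
  by (auto intro!: derivative_eq_intros)

lemma px_family: "px (\<lambda>x r. x\<^sup>2 * exp (r - x) + (k::real)) x a = (2*x - x\<^sup>2) * exp (a - x)"
  unfolding px_def by (rule DERIV_imp_deriv[OF family_has_derivative_x])

lemma pxx_family: "pxx (\<lambda>x r. x\<^sup>2 * exp (r - x) + (k::real)) x a = (2 - 4*x + x\<^sup>2) * exp (a - x)"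
  unfolding pxx_def px_family by (rule DERIV_imp_deriv[OF family_px_has_derivative_x])

lemma pxxx_family: "pxxx (\<lambda>x r. x\<^sup>2 * exp (r - x) + (k::real)) x a = (-6 + 6*x - x\<^sup>2) * exp (a - x)"
  unfolding pxxx_def pxx_family by (rule DERIV_imp_deriv[OF family_pxx_has_derivative_x])

lemma pxa_family: "pxa (\<lambda>x r. x\<^sup>2 * exp (r - x) + (k::real)) x a = (2*x - x\<^sup>2) * exp (a - x)"
  unfolding pxa_def px_family by (rule DERIV_imp_deriv[OF family_px_has_derivative_param])

lemma regular_family_family: "regular_family (\<lambda>x r. x\<^sup>2 * exp (r - x) + (k::real))"
  unfolding regular_family_def px_family pxx_family
proof (intro conjI allI)
  have "continuous_on UNIV (\<lambda>p::real \<times> real. (fst p)\<^sup>2 * exp (snd p - fst p) + k)"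
    by (intro continuous_intros)
  then show "continuous_on UNIV (\<lambda>(x, a). x\<^sup>2 * exp (a - x) + k)"
    by (simp add: case_prod_beta')
qed (use family_has_derivative_x family_px_has_derivative_x family_pxx_has_derivative_x
       family_px_has_derivative_param real_differentiable_def in blast)+

lemma exp_flip_parameter:
  fixes x :: real
  assumes "x > 2"
  shows "exp (x - ln (x * (x - 2)) - x) = 1 / (x * (x - 2))"
  using assms by (simp add: exp_minus divide_inverse)

lemma px_family_flip_parameter:
  fixes x :: real
  assumes "x > 2"
  shows "px (\<lambda>x r. x\<^sup>2 * exp (r - x) + k) x (x - ln (x * (x - 2))) = -1"
  unfolding px_family exp_flip_parameter[OF assms]
  using assms by (simp add: power2_eq_square field_simps)

lemma pxa_family_flip_parameter:
  fixes x :: real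
  assumes "x > 2"
  shows "pxa (\<lambda>x r. x\<^sup>2 * exp (r - x) + k) x (x - ln (x * (x - 2))) = -1"
  unfolding pxa_family exp_flip_parameter[OF assms]
  using assms by (simp add: power2_eq_square field_simps)

lemma Qf_family_flip_parameter_pos:
  fixes x :: real
  assumes "x > 2"
  shows "Qf (\<lambda>x r. x\<^sup>2 * exp (r - x) + k) x (x - ln (x * (x - 2))) > 0"
proof -
  define t where "t = x - 2"
  define D where "D = x * (x - 2)"
  have "t > 0" and "D > 0"
    using assms by (simp_all add: t_def D_def)
  have "Qf (\<lambda>x r. x\<^sup>2 * exp (r - x) + k) x (x - ln (x * (x - 2)))
      = ((2 - 4*x + x\<^sup>2) / D)\<^sup>2 / 2 + ((-6 + 6*x - x\<^sup>2) / D) / 3"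
    unfolding Qf_def pxx_family pxxx_family exp_flip_parameter[OF assms] D_def by simp
  also have "\<dots> = (3 * (2 - 4*x + x\<^sup>2)\<^sup>2 + 2 * D * (-6 + 6*x - x\<^sup>2)) / (6 * D\<^sup>2)"
    using \<open>D > 0\<close> by (simp add: field_simps power2_eq_square)
  also have "3 * (2 - 4*x + x\<^sup>2)\<^sup>2 + 2 * D * (-6 + 6*x - x\<^sup>2) = t^4 + 8*t + 12"
    by (simp add: t_def D_def algebra_simps power2_eq_square power4_eq_xxxx)
  finally show ?thesis
    using \<open>t > 0\<close> \<open>D > 0\<close> by (simp add: add_pos_nonneg)
qed

lemma family_fixed_point_flip_parameter:
  fixes x k :: real
  assumes "x > 2" and "x\<^sup>2 - (k + 3) * x + 2 * k = 0"
  shows "x\<^sup>2 * exp (x - ln (x * (x - 2)) - x) + k = x"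
proof -
  have "x * (x * (x - 2)) - (x\<^sup>2 + k * (x * (x - 2))) = x * (x\<^sup>2 - (k + 3) * x + 2 * k)"
    by (simp add: algebra_simps power2_eq_square)
  with assms show ?thesis
    unfolding exp_flip_parameter[OF assms(1)] by (simp add: field_simps)
qed

lemma supercritical_flip_bifurcation_family:
  fixes x k :: real
  assumes "x > 2" and "x\<^sup>2 - (k + 3) * x + 2 * k = 0"
  shows "supercritical_flip_bifurcation (\<lambda>x r. x\<^sup>2 * exp (r - x) + k) x (x - ln (x * (x - 2)))"
proof -
  have "Qf (\<lambda>x r. x\<^sup>2 * exp (r - x) + k) x (x - ln (x * (x - 2))) > 0"
    using assms(1) by (rule Qf_family_flip_parameter_pos)
  then show ?thesis
    unfolding supercritical_flip_bifurcation_def flip_bifurcation_def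
    using family_fixed_point_flip_parameter[OF assms] regular_family_family
      px_family_flip_parameter[OF assms(1)] pxa_family_flip_parameter[OF assms(1)]
    by auto
qed

lemma flip_root_gt_two:
  fixes k :: real
  shows "(k + 3 + sqrt (k\<^sup>2 - 2 * k + 9)) / 2 > 2"
proof -
  have "(1 - k)\<^sup>2 < k\<^sup>2 - 2 * k + 9"
    by (simp add: power2_eq_square algebra_simps)
  then have "\<bar>1 - k\<bar> < sqrt (k\<^sup>2 - 2 * k + 9)"
    using real_less_rsqrt by fastforce
  then show ?thesis
    by (simp add: field_simps)
qed

lemma flip_root_quadratic:
  fixes k x :: real
  assumes "x = (k + 3 + sqrt (k\<^sup>2 - 2 * k + 9)) / 2"
  shows "x\<^sup>2 - (k + 3) * x + 2 * k = 0"
proof -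
  have "0 \<le> k\<^sup>2 - 2 * k + 9"
    using zero_le_power2[of "k - 1"] by (simp add: power2_eq_square algebra_simps)
  then have "(sqrt (k\<^sup>2 - 2 * k + 9))\<^sup>2 = k\<^sup>2 - 2 * k + 9"
    by simp
  then show ?thesis
    unfolding assms by (simp add: power2_eq_square field_simps)
qed

theorem theorem2p2:
  fixes k x0 r0 :: real
  assumes "k \<ge> 0"
    and "x0 = (k + 3 + sqrt (k\<^sup>2 - 2 * k + 9)) / 2"
    and "r0 = x0 - ln (x0 * (x0 - 2))"
  shows "(\<lambda>x r. x\<^sup>2 * exp (r - x) + k) x0 r0 = x0 \<and>
         supercritical_flip_bifurcation (\<lambda>x r. x\<^sup>2 * exp (r - x) + k) x0 r0"
proof -
  have "x0 > 2"
    unfolding assms(2) by (rule flip_root_gt_two)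
  moreover have "x0\<^sup>2 - (k + 3) * x0 + 2 * k = 0"
    using assms(2) by (rule flip_root_quadratic)
  ultimately show ?thesis
    unfolding assms(3)
    by (intro conjI family_fixed_point_flip_parameter supercritical_flip_bifurcation_family)
qed

end
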